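(* Let $\mathcal A$ be a finite set, $\phi:F(\mathcal A)\to F(\mathcal A)$ a homomorphism, $\mathcal R\subset F(\mathcal A)$ finite, and let $G$ be the ascending HNN extension with finite presentation $\mathcal P=\langle t,\mathcal A:\mathcal R,\ t^{-1}at=\phi(a)\ \text{for all } a\in\mathcal A\rangle$. Then the subgroup $A$ of $G$ generated by $\mathcal A$ has presentation $$A=\Big\langle \mathcal A:\ N^\infty(\mathcal R,\phi)\equiv\bigcup_{i=0}^\infty\phi^{-i}\Big(N\big(\textstyle\bigcup_{j=0}^\infty\phi^j(\mathcal R)\big)\Big)\Big\rangle.$$ Furthermore: (1) $\phi^{-i}(N(\bigcup_{j\ge0}\phi^j(\mathcal R)))\subset\phi^{-(i+1)}(N(\bigcup_{j\ge0}\phi^j(\mathcal R)))$ for all $i\ge0$; (2) $\phi(N^\infty(\mathcal R,\phi))\subset N^\infty(\mathcal R,\phi)=\phi^{-1}(N^\infty(\mathcal R,\phi))$.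
   Context: $F(\mathcal A)$ is the free group on $\mathcal A$; for $S\subset F(\mathcal A)$, $N(S)$ denotes the normal closure of $S$ in $F(\mathcal A)$, and $\phi^{-i}$ denotes full preimage under $\phi^i$. *)

theory Defs
  imports "HOL-Algebra.Algebra"
begin

text \<open>Free group on a set of generators A, realised as reduced words.
 A letter is a pair (a, b); b = False means a, b = True means a inverse.\<close>

type_synonym 'a fword = "('a \<times> bool) list"

fun red_cons :: "'a \<times> bool \<Rightarrow> 'a fword \<Rightarrow> 'a fword" where
  "red_cons x [] = [x]"
| "red_cons x (y # ys) = (if fst x = fst y \<and> snd x \<noteq> snd y then ys else x # y # ys)"

definition reduce :: "'a fword \<Rightarrow> 'a fword" where
  "reduce w = foldr red_cons w []"

fun reduced :: "'a fword \<Rightarrow> bool" where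
  "reduced [] = True"
| "reduced [x] = True"
| "reduced (x # y # ys) = (\<not> (fst x = fst y \<and> snd x \<noteq> snd y) \<and> reduced (y # ys))"

definition free_group :: "'a set \<Rightarrow> 'a fword monoid" where
  "free_group A = \<lparr> carrier = {w. reduced w \<and> fst ` set w \<subseteq> A},
                    monoid.mult = (\<lambda>u v. reduce (u @ v)),
                    monoid.one = [] \<rparr>"

definition letter :: "'a \<Rightarrow> 'a fword" where
  "letter a = [(a, False)]"

definition normal_closure :: "('g, 'm) monoid_scheme \<Rightarrow> 'g set \<Rightarrow> 'g set" where
  "normal_closure G S = \<Inter> {N. N \<lhd> G \<and> S \<subseteq> N}"

definition preim_pow :: "'a set \<Rightarrow> ('a fword \<Rightarrow> 'a fword) \<Rightarrow> nat \<Rightarrow> 'a fword set \<Rightarrow> 'a fword set" where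
  "preim_pow A \<phi> i S = {w \<in> carrier (free_group A). (\<phi> ^^ i) w \<in> S}"

definition NR :: "'a set \<Rightarrow> 'a fword set \<Rightarrow> ('a fword \<Rightarrow> 'a fword) \<Rightarrow> 'a fword set" where
  "NR A R \<phi> = normal_closure (free_group A) (\<Union>j. (\<phi> ^^ j) ` R)"

definition Ninf :: "'a set \<Rightarrow> 'a fword set \<Rightarrow> ('a fword \<Rightarrow> 'a fword) \<Rightarrow> 'a fword set" where
  "Ninf A R \<phi> = (\<Union>i. preim_pow A \<phi> i (NR A R \<phi>))"

text \<open>The HNN presentation: generators Some a (a in A) and the stable letter t = None.\<close>
definition embed :: "'a fword \<Rightarrow> 'a option fword" where
  "embed w = map (\<lambda>(a, b). (Some a, b)) w"

abbreviation FG :: "'a set \<Rightarrow> 'a option fword monoid" where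
  "FG A \<equiv> free_group (insert None (Some ` A))"

definition hnn_relators :: "'a set \<Rightarrow> 'a fword set \<Rightarrow> ('a fword \<Rightarrow> 'a fword) \<Rightarrow> 'a option fword set" where
  "hnn_relators A R \<phi> = embed ` R \<union>
     {inv\<^bsub>FG A\<^esub> (letter None) \<otimes>\<^bsub>FG A\<^esub> letter (Some a) \<otimes>\<^bsub>FG A\<^esub> letter None
        \<otimes>\<^bsub>FG A\<^esub> inv\<^bsub>FG A\<^esub> (embed (\<phi> (letter a))) | a. a \<in> A}"

definition hnn_rel_subgroup :: "'a set \<Rightarrow> 'a fword set \<Rightarrow> ('a fword \<Rightarrow> 'a fword) \<Rightarrow> 'a option fword set" where
  "hnn_rel_subgroup A R \<phi> = normal_closure (FG A) (hnn_relators A R \<phi>)"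

definition hnn_group :: "'a set \<Rightarrow> 'a fword set \<Rightarrow> ('a fword \<Rightarrow> 'a fword) \<Rightarrow> 'a option fword set monoid" where
  "hnn_group A R \<phi> = FG A Mod hnn_rel_subgroup A R \<phi>"

text \<open>The natural homomorphism F(A) \<rightarrow> G, a \<mapsto> a, whose image is the subgroup A of G.\<close>
definition hnn_incl :: "'a set \<Rightarrow> 'a fword set \<Rightarrow> ('a fword \<Rightarrow> 'a fword) \<Rightarrow> 'a fword \<Rightarrow> 'a option fword set" where
  "hnn_incl A R \<phi> w = hnn_rel_subgroup A R \<phi> #>\<^bsub>FG A\<^esub> embed w"

end

theory Submission
  imports Defs
begin

text \<open>
  In \<open>G\<close> conjugation by \<open>t\<close> restricts to \<open>\<phi>\<close> on the image of \<open>F(A)\<close> and is injective.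
  As every \<open>\<phi>\<^sup>j(r)\<close> with \<open>r \<in> R\<close> dies in \<open>G\<close>, so does every \<open>w\<close> with
  \<open>\<phi>\<^sup>i(w) \<in> N(\<Union>\<^sub>j \<phi>\<^sup>j(R))\<close>, i.e. \<open>N\<^sup>\<infinity>(R, \<phi>)\<close> lies in the kernel.
  Conversely, \<open>\<phi>\<close> induces an injective endomorphism of \<open>F(A)/N\<^sup>\<infinity>(R, \<phi>)\<close>, and \<open>G\<close> acts on
  its direct limit: a pair \<open>(v, n)\<close> stands for \<open>t\<^sup>n v t\<^sup>-\<^sup>n\<close>, words act by left
  multiplication and \<open>t\<close> by conjugation, which raises the level \<open>n\<close>. A word \<open>w\<close> moves the
  base point \<open>(1, 0)\<close> to \<open>(w, 0)\<close>, so every element of the kernel lies in \<open>N\<^sup>\<infinity>(R, \<phi>)\<close>.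
  The remaining claims are formal consequences of \<open>\<phi>(N(\<Union>\<^sub>j \<phi>\<^sup>j(R))) \<subseteq> N(\<Union>\<^sub>j \<phi>\<^sup>j(R))\<close>.
\<close>

section \<open>Free groups on reduced words\<close>

definition inv_letter :: "'a \<times> bool \<Rightarrow> 'a \<times> bool" where
  "inv_letter x = (fst x, \<not> snd x)"

lemma reduced_ConsD: "reduced (x # w) \<Longrightarrow> reduced w"
  by (cases w) auto

lemma reduced_red_cons: "reduced w \<Longrightarrow> reduced (red_cons x w)"
proof (cases w)
  case (Cons y ys)
  assume "reduced w"
  then show ?thesis using Cons by (cases ys) (auto dest: reduced_ConsD)
qed simp

lemma reduced_foldr_red_cons: "reduced z \<Longrightarrow> reduced (foldr red_cons u z)"
  by (induction u) (auto intro: reduced_red_cons)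

lemma reduced_reduce: "reduced (reduce w)"
  unfolding reduce_def by (rule reduced_foldr_red_cons) simp

lemma set_red_cons: "set (red_cons x w) \<subseteq> insert x (set w)"
  by (cases w) auto

lemma set_foldr_red_cons: "set (foldr red_cons u z) \<subseteq> set u \<union> set z"
  by (induction u) (use set_red_cons in fastforce)+

lemma set_reduce: "set (reduce w) \<subseteq> set w"
  unfolding reduce_def using set_foldr_red_cons[of w "[]"] by simp

lemma red_cons_reduced: "reduced (x # w) \<Longrightarrow> red_cons x w = x # w"
  by (cases w) auto

lemma reduce_reduced: "reduced w \<Longrightarrow> reduce w = w"
proof (induction w)
  case (Cons x w)
  then have "reduce w = w" using reduced_ConsD by blast
  then show ?case using Cons.prems by (simp add: reduce_def red_cons_reduced)
qed (simp add: reduce_def)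

lemma red_cons_inv_letter: "reduced w \<Longrightarrow> red_cons (inv_letter x) (red_cons x w) = w"
proof (cases w)
  case (Cons y ys)
  assume w: "reduced w"
  show ?thesis
  proof (cases "fst x = fst y \<and> snd x \<noteq> snd y")
    case True
    then have "inv_letter x = y" by (cases x, cases y) (auto simp: inv_letter_def)
    then show ?thesis using True Cons w by (auto simp: red_cons_reduced)
  qed (use Cons in \<open>auto simp: inv_letter_def\<close>)
qed (simp add: inv_letter_def)

lemma foldr_red_cons_red_cons:
  assumes "reduced y" "reduced z"
  shows "foldr red_cons (red_cons x y) z = red_cons x (foldr red_cons y z)"
proof (cases y)
  case (Cons y1 ys)
  show ?thesis
  proof (cases "fst x = fst y1 \<and> snd x \<noteq> snd y1")
    case True
    then have "x = inv_letter y1" by (cases x, cases y1) (auto simp: inv_letter_def)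
    then show ?thesis
      using True Cons red_cons_inv_letter[OF reduced_foldr_red_cons[OF assms(2)], of y1 ys] by auto
  qed (use Cons in auto)
qed simp

lemma foldr_red_cons_reduce: "reduced z \<Longrightarrow> foldr red_cons (reduce u) z = foldr red_cons u z"
proof (induction u)
  case (Cons x u)
  have "foldr red_cons (reduce (x # u)) z = foldr red_cons (red_cons x (reduce u)) z"
    by (simp add: reduce_def)
  also have "\<dots> = red_cons x (foldr red_cons (reduce u) z)"
    by (rule foldr_red_cons_red_cons[OF reduced_reduce Cons.prems])
  finally show ?case using Cons by simp
qed (simp add: reduce_def)

lemma reduce_append: "reduce (u @ v) = foldr red_cons u (reduce v)"
  by (simp add: reduce_def)

lemma reduce_assoc: "reduce (reduce (u @ v) @ w) = reduce (u @ reduce (v @ w))"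
proof -
  have "reduce (reduce (u @ v) @ w) = foldr red_cons (reduce (u @ v)) (reduce w)"
    by (rule reduce_append)
  also have "\<dots> = foldr red_cons (u @ v) (reduce w)"
    by (simp add: foldr_red_cons_reduce reduced_reduce)
  finally have "reduce (reduce (u @ v) @ w) = foldr red_cons (u @ v) (reduce w)" .
  moreover have "reduce (reduce (v @ w)) = foldr red_cons v (reduce w)"
    by (simp add: reduce_reduced reduced_reduce reduce_append[symmetric])
  ultimately show ?thesis by (simp add: reduce_append)
qed

lemma foldr_red_cons_inverse: "reduced w \<Longrightarrow> foldr red_cons (rev (map inv_letter w)) w = []"
proof (induction w)
  case (Cons x w)
  have w: "reduced w" using Cons.prems reduced_ConsD by blast
  have "red_cons (inv_letter x) (x # w) = w"
    using red_cons_inv_letter[OF w, of x] red_cons_reduced[OF Cons.prems] by simp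
  then show ?case using Cons.IH[OF w] by simp
qed simp

lemma free_group_carrier: "w \<in> carrier (free_group A) \<longleftrightarrow> reduced w \<and> fst ` set w \<subseteq> A"
  by (simp add: free_group_def)

lemma free_group_mult: "x \<otimes>\<^bsub>free_group A\<^esub> y = reduce (x @ y)"
  by (simp add: free_group_def)

lemma free_group_one: "\<one>\<^bsub>free_group A\<^esub> = []"
  by (simp add: free_group_def)

lemma group_free_group: "group (free_group A)"
proof (rule groupI)
  fix x assume x: "x \<in> carrier (free_group A)"
  let ?y = "reduce (rev (map inv_letter x))"
  have "?y \<in> carrier (free_group A)"
    using x set_reduce[of "rev (map inv_letter x)"]
    by (force simp: free_group_carrier reduced_reduce inv_letter_def)
  moreover have "?y \<otimes>\<^bsub>free_group A\<^esub> x = \<one>\<^bsub>free_group A\<^esub>"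
    using x by (simp add: free_group_def reduce_append foldr_red_cons_reduce reduce_reduced
        foldr_red_cons_inverse)
  ultimately show "\<exists>y \<in> carrier (free_group A). y \<otimes>\<^bsub>free_group A\<^esub> x = \<one>\<^bsub>free_group A\<^esub>"
    by blast
qed (auto simp: free_group_def reduced_reduce reduce_assoc reduce_reduced
    dest!: subsetD[OF set_reduce]; force)+

lemma free_group_Cons:
  assumes "x # w \<in> carrier (free_group A)"
  shows "[x] \<in> carrier (free_group A)" "w \<in> carrier (free_group A)"
    "x # w = [x] \<otimes>\<^bsub>free_group A\<^esub> w"
  using assms by (auto simp: free_group_carrier free_group_mult reduce_append reduce_reduced
      red_cons_reduced dest: reduced_ConsD)

lemma letter_in_free_group: "a \<in> A \<Longrightarrow> letter a \<in> carrier (free_group A)"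
  by (simp add: free_group_carrier letter_def)

lemma inv_letter_free_group: "a \<in> A \<Longrightarrow> inv\<^bsub>free_group A\<^esub> (letter a) = [(a, True)]"
proof -
  assume a: "a \<in> A"
  interpret F: group "free_group A" by (rule group_free_group)
  have "[(a, True)] \<otimes>\<^bsub>free_group A\<^esub> letter a = \<one>\<^bsub>free_group A\<^esub>"
    by (simp add: free_group_mult free_group_one letter_def reduce_def)
  moreover have "[(a, True)] \<in> carrier (free_group A)" using a by (simp add: free_group_carrier)
  ultimately show ?thesis using F.inv_equality letter_in_free_group[OF a] by blast
qed

lemma singleton_free_group_cases:
  assumes "[x] \<in> carrier (free_group A)"
  obtains "fst x \<in> A" "[x] = letter (fst x)"
    | "fst x \<in> A" "[x] = inv\<^bsub>free_group A\<^esub> (letter (fst x))"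
  using assms inv_letter_free_group[of "fst x" A]
  by (cases x) (auto simp: free_group_carrier letter_def)

lemma free_group_hom_eq:
  assumes "group H" and f: "f \<in> hom (free_group A) H" and g: "g \<in> hom (free_group A) H"
    and letters: "\<And>a. a \<in> A \<Longrightarrow> f (letter a) = g (letter a)"
    and "w \<in> carrier (free_group A)"
  shows "f w = g w"
proof -
  interpret F: group "free_group A" by (rule group_free_group)
  interpret f: group_hom "free_group A" H f
    using f \<open>group H\<close> by (simp add: group_hom_def group_hom_axioms_def F.is_group)
  interpret g: group_hom "free_group A" H g
    using g \<open>group H\<close> by (simp add: group_hom_def group_hom_axioms_def F.is_group)
  show ?thesis
    using \<open>w \<in> carrier (free_group A)\<close>
  proof (induction w)
    case Nil
    show ?case using f.hom_one g.hom_one by (simp add: free_group_one)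
  next
    case (Cons x w)
    note x_w = free_group_Cons[OF Cons.prems]
    have "f [x] = g [x]"
      using x_w(1) by (cases rule: singleton_free_group_cases)
        (auto simp: letters f.hom_inv g.hom_inv letter_in_free_group)
    then show ?case using x_w Cons.IH by simp
  qed
qed

definition free_lift :: "('b, 'm) monoid_scheme \<Rightarrow> ('a \<Rightarrow> 'b) \<Rightarrow> 'a fword \<Rightarrow> 'b" where
  "free_lift H g w =
     foldr (\<lambda>x y. (if snd x then inv\<^bsub>H\<^esub> (g (fst x)) else g (fst x)) \<otimes>\<^bsub>H\<^esub> y) w \<one>\<^bsub>H\<^esub>"

lemma free_lift_Nil: "free_lift H g [] = \<one>\<^bsub>H\<^esub>"
  by (simp add: free_lift_def)

lemma free_lift_Cons:
  "free_lift H g (x # w) = (if snd x then inv\<^bsub>H\<^esub> (g (fst x)) else g (fst x)) \<otimes>\<^bsub>H\<^esub> free_lift H g w"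
  by (simp add: free_lift_def)

context
  fixes H and g :: "'a \<Rightarrow> 'b" and A :: "'a set"
  assumes H: "group H" and g: "g ` A \<subseteq> carrier H"
begin

interpretation H: group H by (rule H)

lemma free_lift_closed: "fst ` set w \<subseteq> A \<Longrightarrow> free_lift H g w \<in> carrier H"
  by (induction w) (use g in \<open>auto simp: free_lift_Nil free_lift_Cons\<close>)

lemma free_lift_red_cons:
  assumes "fst x \<in> A" "fst ` set w \<subseteq> A"
  shows "free_lift H g (red_cons x w) = free_lift H g (x # w)"
proof (cases w)
  case (Cons y ys)
  have "free_lift H g ys \<in> carrier H" "g (fst x) \<in> carrier H"
    using free_lift_closed assms g Cons by auto
  then show ?thesis
    using Cons by (cases "snd x") (auto simp: free_lift_Cons H.m_assoc[symmetric])
qed simp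

lemma free_lift_reduce: "fst ` set w \<subseteq> A \<Longrightarrow> free_lift H g (reduce w) = free_lift H g w"
proof (induction w)
  case (Cons x w)
  have "fst ` set (reduce w) \<subseteq> A" using Cons.prems set_reduce by fastforce
  then have "free_lift H g (reduce (x # w)) = free_lift H g (x # reduce w)"
    using free_lift_red_cons Cons.prems by (simp add: reduce_def)
  then show ?case using Cons by (simp add: free_lift_Cons)
qed (simp add: reduce_def)

lemma free_lift_append:
  "fst ` set u \<subseteq> A \<Longrightarrow> fst ` set v \<subseteq> A \<Longrightarrow>
    free_lift H g (u @ v) = free_lift H g u \<otimes>\<^bsub>H\<^esub> free_lift H g v"
proof (induction u)
  case (Cons x u)
  have "g (fst x) \<in> carrier H" using g Cons.prems by auto
  then show ?case using Cons free_lift_closed by (simp add: free_lift_Cons H.m_assoc)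
qed (simp add: free_lift_Nil free_lift_closed)

lemma free_lift_hom: "free_lift H g \<in> hom (free_group A) H"
proof (rule homI)
  fix x y assume "x \<in> carrier (free_group A)" "y \<in> carrier (free_group A)"
  then have "fst ` set x \<subseteq> A" "fst ` set y \<subseteq> A" "fst ` set (x @ y) \<subseteq> A"
    by (auto simp: free_group_carrier)
  then show "free_lift H g (x \<otimes>\<^bsub>free_group A\<^esub> y) = free_lift H g x \<otimes>\<^bsub>H\<^esub> free_lift H g y"
    by (simp only: free_group_mult free_lift_reduce free_lift_append)
qed (simp add: free_group_carrier free_lift_closed)

lemma free_lift_letter: "a \<in> A \<Longrightarrow> free_lift H g (letter a) = g a"
  using g by (auto simp: letter_def free_lift_Cons free_lift_Nil)

end

definition some_letter :: "'a \<times> bool \<Rightarrow> 'a option \<times> bool" where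
  "some_letter = (\<lambda>(a, b). (Some a, b))"

lemma embed_eq_map: "embed w = map some_letter w"
  by (simp add: embed_def some_letter_def)

lemma red_cons_map_some_letter:
  "red_cons (some_letter x) (map some_letter w) = map some_letter (red_cons x w)"
  by (cases w) (auto simp: some_letter_def split: prod.splits)

lemma reduce_map_some_letter: "reduce (map some_letter w) = map some_letter (reduce w)"
  by (induction w) (auto simp: reduce_def red_cons_map_some_letter)

lemma reduced_map_some_letter: "reduced (map some_letter w) = reduced w"
  by (induction w rule: reduced.induct) (auto simp: some_letter_def split: prod.splits)

lemma embed_hom: "embed \<in> hom (free_group A) (FG A)"
proof (rule homI)
  fix x assume "x \<in> carrier (free_group A)"
  then show "embed x \<in> carrier (FG A)"
    unfolding free_group_carrier embed_eq_map reduced_map_some_letter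
    by (auto simp: some_letter_def split: prod.splits)
qed (simp add: free_group_mult embed_eq_map reduce_map_some_letter[symmetric])

lemma embed_letter: "embed (letter a) = letter (Some a)"
  by (simp add: embed_def letter_def)

lemma normal_preimage:
  assumes "group G" "group H" "f \<in> hom G H" "N \<lhd> H"
  shows "{x \<in> carrier G. f x \<in> N} \<lhd> G"
proof -
  interpret G: group G by fact
  interpret f: group_hom G H f
    using assms by (simp add: group_hom_def group_hom_axioms_def)
  interpret N: normal N H by fact
  show ?thesis
  proof (intro G.normal_inv_iff[THEN iffD2] conjI ballI)
    show "subgroup {x \<in> carrier G. f x \<in> N} G"
      by (rule G.subgroupI) (auto simp: f.hom_inv f.hom_mult intro!: exI[of _ "\<one>\<^bsub>G\<^esub>"])
  qed (auto simp: f.hom_inv f.hom_mult N.inv_op_closed2)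
qed

lemma normal_closure_minimal: "N \<lhd> G \<Longrightarrow> S \<subseteq> N \<Longrightarrow> normal_closure G S \<subseteq> N"
  by (auto simp: normal_closure_def)

lemma subset_normal_closure: "S \<subseteq> normal_closure G S"
  by (auto simp: normal_closure_def)

lemma normal_closure_normal:
  assumes "group G" "S \<subseteq> carrier G"
  shows "normal_closure G S \<lhd> G"
proof -
  interpret G: group G by fact
  have "carrier G \<in> {N. N \<lhd> G \<and> S \<subseteq> N}"
    using assms(2) G.normal_self by blast
  then show ?thesis
    unfolding normal_closure_def
    by (intro G.normal_inv_iff[THEN iffD2] conjI ballI G.subgroups_Inter)
      (auto dest: normal_imp_subgroup intro: normal.inv_op_closed2)
qed

lemma normal_closure_of_normal: "group G \<Longrightarrow> N \<lhd> G \<Longrightarrow> normal_closure G N = N"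
  by (meson normal_closure_minimal subset_normal_closure order_refl subset_antisym)

lemma (in group) conjugate_mult:
  "a \<in> carrier G \<Longrightarrow> x \<in> carrier G \<Longrightarrow> y \<in> carrier G \<Longrightarrow>
    inv a \<otimes> (x \<otimes> y) \<otimes> a = (inv a \<otimes> x \<otimes> a) \<otimes> (inv a \<otimes> y \<otimes> a)"
  by (simp add: m_assoc) (simp add: m_assoc[symmetric])

lemma (in group) conjugate_eq_one:
  assumes "a \<in> carrier G" "x \<in> carrier G" "inv a \<otimes> x \<otimes> a = \<one>"
  shows "x = \<one>"
proof -
  have "x = a \<otimes> (inv a \<otimes> x \<otimes> a) \<otimes> inv a"
    using assms(1,2) by (rule conjugation_is_surj[symmetric])
  also have "\<dots> = \<one>" using assms by simp
  finally show ?thesis .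
qed

section \<open>Maps induced on a quotient set\<close>

definition compatible :: "('x \<times> 'x) set \<Rightarrow> ('x \<Rightarrow> 'x) \<Rightarrow> bool" where
  "compatible r f \<longleftrightarrow> (\<forall>x y. (x, y) \<in> r \<longrightarrow> (f x, f y) \<in> r)"

definition quotient_map :: "'x set \<Rightarrow> ('x \<times> 'x) set \<Rightarrow> ('x \<Rightarrow> 'x) \<Rightarrow> 'x set \<Rightarrow> 'x set" where
  "quotient_map D r f = (\<lambda>S \<in> D // r. \<Union>x \<in> S. r `` {f x})"

lemma compatible_comp: "compatible r f \<Longrightarrow> compatible r g \<Longrightarrow> compatible r (f \<circ> g)"
  by (auto simp: compatible_def)

lemma compatible_id: "compatible r id"
  by (auto simp: compatible_def)

context
  fixes D :: "'x set" and r
  assumes r: "equiv D r"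
begin

lemma compatible_closed: "compatible r f \<Longrightarrow> x \<in> D \<Longrightarrow> f x \<in> D"
  using r unfolding compatible_def equiv_def refl_on_def by blast

lemma quotient_map_class:
  assumes "compatible r f" "x \<in> D"
  shows "quotient_map D r f (r `` {x}) = r `` {f x}"
proof -
  have "r `` {f y} = r `` {f z}" if "(y, z) \<in> r" for y z
    using assms(1) that by (intro equiv_class_eq[OF r]) (simp add: compatible_def)
  then have "(\<lambda>x. r `` {f x}) respects r"
    unfolding congruent_def by blast
  from UN_equiv_class[OF r this assms(2)] show ?thesis
    using quotientI[OF assms(2), of r] unfolding quotient_map_def by (simp only: restrict_apply')
qed

lemma quotient_map_closed: "compatible r f \<Longrightarrow> S \<in> D // r \<Longrightarrow> quotient_map D r f S \<in> D // r"
  by (auto elim!: quotientE simp: quotient_map_class compatible_closed quotientI)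

lemma quotient_map_comp:
  assumes "compatible r f" "compatible r g"
  shows "compose (D // r) (quotient_map D r f) (quotient_map D r g) = quotient_map D r (f \<circ> g)"
proof
  fix S
  show "compose (D // r) (quotient_map D r f) (quotient_map D r g) S = quotient_map D r (f \<circ> g) S"
  proof (cases "S \<in> D // r")
    case True
    then obtain x where "S = r `` {x}" "x \<in> D" by (auto elim!: quotientE)
    then show ?thesis
      using assms True
      by (simp add: compose_def quotient_map_class compatible_closed compatible_comp)
  qed (simp add: quotient_map_def compose_def)
qed

lemma quotient_map_cong:
  assumes "compatible r f" "compatible r g" "\<And>x. x \<in> D \<Longrightarrow> (f x, g x) \<in> r"
  shows "quotient_map D r f = quotient_map D r g"
proof
  fix S
  show "quotient_map D r f S = quotient_map D r g S"
  proof (cases "S \<in> D // r")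
    case True
    then obtain x where "S = r `` {x}" "x \<in> D" by (auto elim!: quotientE)
    then show ?thesis
      using assms equiv_class_eq[OF r, of "f x" "g x"] by (simp add: quotient_map_class)
  qed (simp add: quotient_map_def)
qed

lemma quotient_map_id: "quotient_map D r id = (\<lambda>S \<in> D // r. S)"
proof
  fix S
  show "quotient_map D r id S = (\<lambda>S \<in> D // r. S) S"
  proof (cases "S \<in> D // r")
    case True
    then obtain x where "S = r `` {x}" "x \<in> D" by (auto elim!: quotientE)
    then show ?thesis using True by (simp add: quotient_map_class[OF compatible_id])
  qed (simp add: quotient_map_def)
qed

lemma quotient_map_Bij:
  assumes f: "compatible r f" and g: "compatible r g"
    and "\<And>x. x \<in> D \<Longrightarrow> (f (g x), x) \<in> r" "\<And>x. x \<in> D \<Longrightarrow> (g (f x), x) \<in> r"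
  shows "quotient_map D r f \<in> Bij (D // r)"
proof -
  have "bij_betw (quotient_map D r f) (D // r) (D // r)"
  proof (rule bij_betw_byWitness[where f' = "quotient_map D r g"])
    have "quotient_map D r h (quotient_map D r k S) = S"
      if "compatible r h" "compatible r k" "\<And>x. x \<in> D \<Longrightarrow> (h (k x), x) \<in> r" "S \<in> D // r"
      for h k S
    proof -
      obtain x where "S = r `` {x}" "x \<in> D" using \<open>S \<in> D // r\<close> by (auto elim!: quotientE)
      then show ?thesis
        using that equiv_class_eq[OF r, of "h (k x)" x]
        by (simp add: quotient_map_class compatible_closed)
    qed
    then show "\<forall>S \<in> D // r. quotient_map D r g (quotient_map D r f S) = S"
      "\<forall>S \<in> D // r. quotient_map D r f (quotient_map D r g S) = S"
      using assms by blast+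
  qed (use quotient_map_closed f g in blast)+
  then show ?thesis by (simp add: Bij_def quotient_map_def)
qed

end

section \<open>The subgroups \<open>\<phi>\<^sup>-\<^sup>i(N(\<Union>\<^sub>j \<phi>\<^sup>j(R)))\<close> and \<open>N\<^sup>\<infinity>(R, \<phi>)\<close>\<close>

locale ascending_hnn =
  fixes A :: "'a set" and R :: "'a fword set" and \<phi> :: "'a fword \<Rightarrow> 'a fword"
  assumes phi_hom: "\<phi> \<in> hom (free_group A) (free_group A)"
    and R_carrier: "R \<subseteq> carrier (free_group A)"
begin

abbreviation F where "F \<equiv> free_group A"
abbreviation K where "K \<equiv> Ninf A R \<phi>"

interpretation F: group F by (rule group_free_group)

lemma group_hom_phi_pow: "group_hom F F (\<phi> ^^ i)"
proof -
  have "\<phi> ^^ i \<in> hom F F"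
  proof (induction i)
    case (Suc i)
    then show ?case using hom_compose[OF Suc phi_hom] by (simp add: comp_def)
  qed (auto simp: hom_def)
  then show ?thesis by (simp add: group_hom_def group_hom_axioms_def F.is_group)
qed

lemma phi_pow_closed: "x \<in> carrier F \<Longrightarrow> (\<phi> ^^ i) x \<in> carrier F"
  using group_hom.hom_closed[OF group_hom_phi_pow] .

lemma phi_pow_mult:
  "x \<in> carrier F \<Longrightarrow> y \<in> carrier F \<Longrightarrow> (\<phi> ^^ i) (x \<otimes>\<^bsub>F\<^esub> y) = (\<phi> ^^ i) x \<otimes>\<^bsub>F\<^esub> (\<phi> ^^ i) y"
  using group_hom.hom_mult[OF group_hom_phi_pow] .

lemma phi_pow_inv: "x \<in> carrier F \<Longrightarrow> (\<phi> ^^ i) (inv\<^bsub>F\<^esub> x) = inv\<^bsub>F\<^esub> (\<phi> ^^ i) x"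
  using group_hom.hom_inv[OF group_hom_phi_pow] .

lemma phi_closed: "x \<in> carrier F \<Longrightarrow> \<phi> x \<in> carrier F"
  using phi_pow_closed[of x 1] by simp

lemma phi_pow_phi_pow: "(\<phi> ^^ i) ((\<phi> ^^ j) x) = (\<phi> ^^ (i + j)) x"
  by (simp add: funpow_add)

lemma phi_orbit_carrier: "(\<Union>j. (\<phi> ^^ j) ` R) \<subseteq> carrier F"
  using R_carrier phi_pow_closed by auto

lemma NR_normal: "NR A R \<phi> \<lhd> F"
  unfolding NR_def by (rule normal_closure_normal[OF group_free_group phi_orbit_carrier])

lemma phi_pow_in_NR: "r \<in> R \<Longrightarrow> (\<phi> ^^ j) r \<in> NR A R \<phi>"
  unfolding NR_def by (rule subsetD[OF subset_normal_closure]) blast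

lemma phi_NR: "x \<in> NR A R \<phi> \<Longrightarrow> \<phi> x \<in> NR A R \<phi>"
proof -
  have "NR A R \<phi> \<subseteq> {x \<in> carrier F. \<phi> x \<in> NR A R \<phi>}"
    unfolding NR_def
  proof (rule normal_closure_minimal)
    show "{x \<in> carrier F. \<phi> x \<in> normal_closure F (\<Union>j. (\<phi> ^^ j) ` R)} \<lhd> F"
      using normal_preimage[OF group_free_group group_free_group phi_hom NR_normal]
      by (simp add: NR_def)
    have "\<phi> ((\<phi> ^^ j) r) \<in> NR A R \<phi>" if "r \<in> R" for j r
      using phi_pow_in_NR[OF that, of "Suc j"] by simp
    then show "(\<Union>j. (\<phi> ^^ j) ` R) \<subseteq> {x \<in> carrier F. \<phi> x \<in> normal_closure F (\<Union>j. (\<phi> ^^ j) ` R)}"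
      using phi_orbit_carrier unfolding NR_def by blast
  qed
  then show "x \<in> NR A R \<phi> \<Longrightarrow> \<phi> x \<in> NR A R \<phi>" by blast
qed

lemma preim_pow_normal: "preim_pow A \<phi> i (NR A R \<phi>) \<lhd> F"
  unfolding preim_pow_def
  by (rule normal_preimage[OF group_free_group group_free_group
        group_hom.homh[OF group_hom_phi_pow] NR_normal])

lemma preim_pow_subset_Suc: "preim_pow A \<phi> i (NR A R \<phi>) \<subseteq> preim_pow A \<phi> (Suc i) (NR A R \<phi>)"
  using phi_NR by (auto simp: preim_pow_def)

lemma preim_pow_mono: "i \<le> j \<Longrightarrow> preim_pow A \<phi> i (NR A R \<phi>) \<subseteq> preim_pow A \<phi> j (NR A R \<phi>)"
  by (induction j rule: dec_induct) (use preim_pow_subset_Suc in auto)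

lemma mem_Ninf_iff: "x \<in> K \<longleftrightarrow> (\<exists>i. x \<in> preim_pow A \<phi> i (NR A R \<phi>))"
  by (simp add: Ninf_def)

lemma Ninf_normal: "K \<lhd> F"
proof (intro F.normal_inv_iff[THEN iffD2] conjI ballI)
  have subgroup: "subgroup (preim_pow A \<phi> i (NR A R \<phi>)) F" for i
    using preim_pow_normal normal_imp_subgroup by blast
  show "subgroup K F"
  proof (rule F.subgroupI)
    show "K \<subseteq> carrier F"
      by (auto simp: mem_Ninf_iff preim_pow_def)
    show "K \<noteq> {}"
      using subgroup.one_closed[OF subgroup[of 0]] by (auto simp: Ninf_def)
  next
    fix a assume "a \<in> K"
    then obtain i where "a \<in> preim_pow A \<phi> i (NR A R \<phi>)" by (auto simp: mem_Ninf_iff)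
    then show "inv\<^bsub>F\<^esub> a \<in> K"
      using subgroup.m_inv_closed[OF subgroup[of i]] by (auto simp: mem_Ninf_iff)
  next
    fix a b assume "a \<in> K" "b \<in> K"
    then obtain i j where "a \<in> preim_pow A \<phi> i (NR A R \<phi>)" "b \<in> preim_pow A \<phi> j (NR A R \<phi>)"
      by (auto simp: mem_Ninf_iff)
    then have "a \<in> preim_pow A \<phi> (max i j) (NR A R \<phi>)" "b \<in> preim_pow A \<phi> (max i j) (NR A R \<phi>)"
      using preim_pow_mono[of i "max i j"] preim_pow_mono[of j "max i j"] by auto
    then show "a \<otimes>\<^bsub>F\<^esub> b \<in> K"
      using subgroup.m_closed[OF subgroup[of "max i j"]] by (auto simp: mem_Ninf_iff)
  qed
next
  fix x h assume "x \<in> carrier F" "h \<in> K"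
  then obtain i where "h \<in> preim_pow A \<phi> i (NR A R \<phi>)" by (auto simp: mem_Ninf_iff)
  then show "x \<otimes>\<^bsub>F\<^esub> h \<otimes>\<^bsub>F\<^esub> inv\<^bsub>F\<^esub> x \<in> K"
    using normal.inv_op_closed2[OF preim_pow_normal[of i]] \<open>x \<in> carrier F\<close>
    by (auto simp: mem_Ninf_iff)
qed

lemma phi_Ninf: "x \<in> K \<Longrightarrow> \<phi> x \<in> K"
proof -
  assume "x \<in> K"
  then obtain i where x: "x \<in> preim_pow A \<phi> i (NR A R \<phi>)" by (auto simp: Ninf_def)
  have "(\<phi> ^^ i) (\<phi> x) = \<phi> ((\<phi> ^^ i) x)" by (simp add: funpow_swap1)
  then have "\<phi> x \<in> preim_pow A \<phi> i (NR A R \<phi>)"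
    using x phi_NR phi_closed by (auto simp: preim_pow_def)
  then show ?thesis by (auto simp: Ninf_def)
qed

lemma phi_pow_Ninf: "x \<in> K \<Longrightarrow> (\<phi> ^^ i) x \<in> K"
  by (induction i) (auto intro: phi_Ninf)

lemma Ninf_phi_pow_preimage: "(\<phi> ^^ i) x \<in> K \<Longrightarrow> x \<in> carrier F \<Longrightarrow> x \<in> K"
proof -
  assume "(\<phi> ^^ i) x \<in> K" "x \<in> carrier F"
  then obtain j where "(\<phi> ^^ i) x \<in> preim_pow A \<phi> j (NR A R \<phi>)" "x \<in> carrier F"
    by (auto simp: Ninf_def)
  then have "x \<in> preim_pow A \<phi> (j + i) (NR A R \<phi>)" by (auto simp: preim_pow_def funpow_add)
  then show ?thesis by (auto simp: Ninf_def)
qed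

lemma Ninf_eq_preim_pow_1: "K = preim_pow A \<phi> 1 K"
proof
  show "K \<subseteq> preim_pow A \<phi> 1 K"
    using phi_Ninf Ninf_normal normal_imp_subgroup subgroup.mem_carrier
    by (fastforce simp: preim_pow_def)
  show "preim_pow A \<phi> 1 K \<subseteq> K"
    using Ninf_phi_pow_preimage[of 1] by (auto simp: preim_pow_def)
qed

section \<open>\<open>N\<^sup>\<infinity>(R, \<phi>)\<close> is contained in the kernel\<close>

abbreviation G where "G \<equiv> hnn_group A R \<phi>"
abbreviation H where "H \<equiv> hnn_rel_subgroup A R \<phi>"
abbreviation \<iota> where "\<iota> \<equiv> hnn_incl A R \<phi>"

definition stable_letter :: "'a option fword set" where
  "stable_letter = H #>\<^bsub>FG A\<^esub> letter None"

interpretation FG: group "FG A" by (rule group_free_group)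

lemma embed_closed: "w \<in> carrier F \<Longrightarrow> embed w \<in> carrier (FG A)"
  using embed_hom by (auto simp: hom_def)

lemma letter_None_closed: "letter None \<in> carrier (FG A)"
  by (simp add: letter_def free_group_carrier)

lemma letter_Some_closed: "a \<in> A \<Longrightarrow> letter (Some a) \<in> carrier (FG A)"
  by (simp add: letter_def free_group_carrier)

lemma hnn_relators_carrier: "hnn_relators A R \<phi> \<subseteq> carrier (FG A)"
proof -
  have "embed (\<phi> (letter a)) \<in> carrier (FG A)" if "a \<in> A" for a
    using embed_closed phi_closed letter_in_free_group[OF that] by blast
  moreover have "embed r \<in> carrier (FG A)" if "r \<in> R" for r
    using embed_closed R_carrier that by blast
  ultimately show ?thesis
    using letter_None_closed letter_Some_closed unfolding hnn_relators_def by auto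
qed

lemma hnn_rel_subgroup_normal: "H \<lhd> FG A"
  unfolding hnn_rel_subgroup_def
  by (rule normal_closure_normal[OF group_free_group hnn_relators_carrier])

lemma hnn_relators_subset: "hnn_relators A R \<phi> \<subseteq> H"
  unfolding hnn_rel_subgroup_def by (rule subset_normal_closure)

lemma group_hnn_group: "group G"
  unfolding hnn_group_def by (rule normal.factorgroup_is_group[OF hnn_rel_subgroup_normal])

interpretation G: group G by (rule group_hnn_group)

lemma group_hom_coset: "group_hom (FG A) G (\<lambda>x. H #>\<^bsub>FG A\<^esub> x)"
  unfolding hnn_group_def
  by (intro group_hom.intro group_hom_axioms.intro FG.is_group
      normal.factorgroup_is_group[OF hnn_rel_subgroup_normal]
      normal.r_coset_hom_Mod[OF hnn_rel_subgroup_normal])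

lemma coset_relator:
  assumes "x \<in> H"
  shows "H #>\<^bsub>FG A\<^esub> x = \<one>\<^bsub>G\<^esub>"
proof -
  have H: "subgroup H (FG A)" by (rule normal_imp_subgroup[OF hnn_rel_subgroup_normal])
  have "H #>\<^bsub>FG A\<^esub> x = H"
    by (rule FG.coset_join2[OF subgroup.mem_carrier[OF H assms] H assms])
  then show ?thesis by (simp add: hnn_group_def one_FactGroup)
qed

lemma hnn_incl_hom: "\<iota> \<in> hom F G"
proof -
  have "\<iota> = (\<lambda>x. H #>\<^bsub>FG A\<^esub> x) \<circ> embed" by (simp add: fun_eq_iff hnn_incl_def)
  then show ?thesis by (metis hom_compose[OF embed_hom group_hom.homh[OF group_hom_coset]])
qed

lemma hnn_incl_closed: "w \<in> carrier F \<Longrightarrow> \<iota> w \<in> carrier G"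
  using hnn_incl_hom by (auto simp: hom_def)

lemma stable_letter_closed: "stable_letter \<in> carrier G"
  using group_hom.hom_closed[OF group_hom_coset letter_None_closed]
  by (simp add: stable_letter_def)

lemma hnn_incl_phi_letter:
  assumes a: "a \<in> A"
  shows "\<iota> (\<phi> (letter a)) = inv\<^bsub>G\<^esub> stable_letter \<otimes>\<^bsub>G\<^esub> \<iota> (letter a) \<otimes>\<^bsub>G\<^esub> stable_letter"
proof -
  interpret \<pi>: group_hom "FG A" G "\<lambda>x. H #>\<^bsub>FG A\<^esub> x" by (rule group_hom_coset)
  have pa: "\<phi> (letter a) \<in> carrier F" using phi_closed letter_in_free_group[OF a] .
  let ?r = "inv\<^bsub>FG A\<^esub> (letter None) \<otimes>\<^bsub>FG A\<^esub> letter (Some a) \<otimes>\<^bsub>FG A\<^esub> letter None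
        \<otimes>\<^bsub>FG A\<^esub> inv\<^bsub>FG A\<^esub> (embed (\<phi> (letter a)))"
  have "?r \<in> H" using hnn_relators_subset a unfolding hnn_relators_def by blast
  then have "H #>\<^bsub>FG A\<^esub> ?r = \<one>\<^bsub>G\<^esub>" by (rule coset_relator)
  then have "inv\<^bsub>G\<^esub> stable_letter \<otimes>\<^bsub>G\<^esub> \<iota> (letter a) \<otimes>\<^bsub>G\<^esub> stable_letter
      \<otimes>\<^bsub>G\<^esub> inv\<^bsub>G\<^esub> \<iota> (\<phi> (letter a)) = \<one>\<^bsub>G\<^esub>"
    using letter_None_closed letter_Some_closed[OF a] embed_closed[OF pa]
    by (simp add: \<pi>.hom_mult \<pi>.hom_inv stable_letter_def hnn_incl_def embed_letter)
  from G.inv_equality[OF this] show ?thesis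
    using stable_letter_closed hnn_incl_closed[OF pa] hnn_incl_closed[OF letter_in_free_group[OF a]]
    by simp
qed

lemma hnn_incl_phi:
  assumes "w \<in> carrier F"
  shows "\<iota> (\<phi> w) = inv\<^bsub>G\<^esub> stable_letter \<otimes>\<^bsub>G\<^esub> \<iota> w \<otimes>\<^bsub>G\<^esub> stable_letter"
proof -
  let ?t = stable_letter
  have "(\<lambda>w. inv\<^bsub>G\<^esub> ?t \<otimes>\<^bsub>G\<^esub> \<iota> w \<otimes>\<^bsub>G\<^esub> ?t) \<in> hom F G"
  proof (rule homI)
    fix x y assume "x \<in> carrier F" "y \<in> carrier F"
    then show "inv\<^bsub>G\<^esub> ?t \<otimes>\<^bsub>G\<^esub> \<iota> (x \<otimes>\<^bsub>F\<^esub> y) \<otimes>\<^bsub>G\<^esub> ?t =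
        (inv\<^bsub>G\<^esub> ?t \<otimes>\<^bsub>G\<^esub> \<iota> x \<otimes>\<^bsub>G\<^esub> ?t) \<otimes>\<^bsub>G\<^esub> (inv\<^bsub>G\<^esub> ?t \<otimes>\<^bsub>G\<^esub> \<iota> y \<otimes>\<^bsub>G\<^esub> ?t)"
      using hnn_incl_hom hnn_incl_closed stable_letter_closed
      by (simp add: hom_mult G.conjugate_mult)
  qed (use hnn_incl_closed stable_letter_closed in auto)
  then show ?thesis
    using free_group_hom_eq[OF group_hnn_group hom_compose[OF phi_hom hnn_incl_hom] _ _ assms]
      hnn_incl_phi_letter
    by simp
qed

lemma hnn_incl_phi_pow_trivial:
  "w \<in> carrier F \<Longrightarrow> \<iota> ((\<phi> ^^ i) w) = \<one>\<^bsub>G\<^esub> \<Longrightarrow> \<iota> w = \<one>\<^bsub>G\<^esub>"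
proof (induction i arbitrary: w)
  case (Suc i)
  have "\<iota> ((\<phi> ^^ i) (\<phi> w)) = \<one>\<^bsub>G\<^esub>" using Suc.prems by (simp add: funpow_swap1)
  then have "\<iota> (\<phi> w) = \<one>\<^bsub>G\<^esub>" using Suc.IH phi_closed Suc.prems by blast
  then have "inv\<^bsub>G\<^esub> stable_letter \<otimes>\<^bsub>G\<^esub> \<iota> w \<otimes>\<^bsub>G\<^esub> stable_letter = \<one>\<^bsub>G\<^esub>"
    using hnn_incl_phi Suc.prems by simp
  then show ?case
    using G.conjugate_eq_one stable_letter_closed hnn_incl_closed[OF Suc.prems(1)] by blast
qed simp

lemma hnn_incl_phi_orbit: "r \<in> R \<Longrightarrow> \<iota> ((\<phi> ^^ j) r) = \<one>\<^bsub>G\<^esub>"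
proof (induction j)
  case 0
  then show ?case
    using hnn_relators_subset coset_relator by (auto simp: hnn_relators_def hnn_incl_def)
next
  case (Suc j)
  have "(\<phi> ^^ j) r \<in> carrier F" using Suc.prems R_carrier phi_pow_closed by blast
  then show ?case using Suc hnn_incl_phi stable_letter_closed by simp
qed

lemma NR_subset_kernel: "NR A R \<phi> \<subseteq> kernel F G \<iota>"
  unfolding NR_def
proof (rule normal_closure_minimal)
  show "kernel F G \<iota> \<lhd> F"
    using hnn_incl_hom
    by (intro group_hom.normal_kernel) (simp add: group_hom_def group_hom_axioms_def F.is_group G.is_group)
  show "(\<Union>j. (\<phi> ^^ j) ` R) \<subseteq> kernel F G \<iota>"
    using hnn_incl_phi_orbit R_carrier phi_pow_closed by (auto simp: kernel_def)
qed

lemma Ninf_subset_kernel: "K \<subseteq> kernel F G \<iota>"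
proof
  fix w assume "w \<in> K"
  then obtain i where "w \<in> carrier F" "(\<phi> ^^ i) w \<in> NR A R \<phi>"
    by (auto simp: Ninf_def preim_pow_def)
  then show "w \<in> kernel F G \<iota>"
    using NR_subset_kernel hnn_incl_phi_pow_trivial by (auto simp: kernel_def)
qed

section \<open>The kernel is contained in \<open>N\<^sup>\<infinity>(R, \<phi>)\<close>\<close>

lemma Ninf_coset_eq_iff:
  assumes "x \<in> carrier F" "y \<in> carrier F"
  shows "K #>\<^bsub>F\<^esub> x = K #>\<^bsub>F\<^esub> y \<longleftrightarrow> x \<otimes>\<^bsub>F\<^esub> inv\<^bsub>F\<^esub> y \<in> K"
proof -
  have K: "subgroup K F" by (rule normal_imp_subgroup[OF Ninf_normal])
  have "K #>\<^bsub>F\<^esub> x = K #>\<^bsub>F\<^esub> y \<longleftrightarrow> x \<in> K #>\<^bsub>F\<^esub> y"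
  proof
    assume "K #>\<^bsub>F\<^esub> x = K #>\<^bsub>F\<^esub> y"
    then show "x \<in> K #>\<^bsub>F\<^esub> y" using F.rcos_self[OF assms(1) K] by simp
  next
    assume "x \<in> K #>\<^bsub>F\<^esub> y"
    from F.repr_independence[OF this assms(2) K] show "K #>\<^bsub>F\<^esub> x = K #>\<^bsub>F\<^esub> y" by (rule sym)
  qed
  also have "\<dots> \<longleftrightarrow> x \<otimes>\<^bsub>F\<^esub> inv\<^bsub>F\<^esub> y \<in> K"
    by (rule subgroup.rcos_module[OF K F.is_group assms(2,1)])
  finally show ?thesis .
qed

lemma Ninf_coset_mult:
  "x \<in> carrier F \<Longrightarrow> y \<in> carrier F \<Longrightarrow>
    K #>\<^bsub>F\<^esub> (x \<otimes>\<^bsub>F\<^esub> y) = (K #>\<^bsub>F\<^esub> x) <#>\<^bsub>F\<^esub> (K #>\<^bsub>F\<^esub> y)"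
  by (simp add: normal.rcos_sum[OF Ninf_normal])

lemma Ninf_coset_phi_pow_eq_iff:
  assumes "x \<in> carrier F" "y \<in> carrier F"
  shows "K #>\<^bsub>F\<^esub> (\<phi> ^^ i) x = K #>\<^bsub>F\<^esub> (\<phi> ^^ i) y \<longleftrightarrow> K #>\<^bsub>F\<^esub> x = K #>\<^bsub>F\<^esub> y"
proof -
  have xy: "x \<otimes>\<^bsub>F\<^esub> inv\<^bsub>F\<^esub> y \<in> carrier F" using assms by simp
  have "(\<phi> ^^ i) x \<otimes>\<^bsub>F\<^esub> inv\<^bsub>F\<^esub> (\<phi> ^^ i) y = (\<phi> ^^ i) (x \<otimes>\<^bsub>F\<^esub> inv\<^bsub>F\<^esub> y)"
    using assms by (simp add: phi_pow_mult phi_pow_inv)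
  moreover have "(\<phi> ^^ i) (x \<otimes>\<^bsub>F\<^esub> inv\<^bsub>F\<^esub> y) \<in> K \<longleftrightarrow> x \<otimes>\<^bsub>F\<^esub> inv\<^bsub>F\<^esub> y \<in> K"
    using phi_pow_Ninf Ninf_phi_pow_preimage[OF _ xy] by blast
  ultimately show ?thesis
    using assms by (simp add: Ninf_coset_eq_iff phi_pow_closed)
qed

definition limit_rel :: "(('a fword \<times> nat) \<times> ('a fword \<times> nat)) set" where
  "limit_rel = {((w, n), (v, m)). w \<in> carrier F \<and> v \<in> carrier F \<and>
     K #>\<^bsub>F\<^esub> (\<phi> ^^ m) w = K #>\<^bsub>F\<^esub> (\<phi> ^^ n) v}"

abbreviation D where "D \<equiv> carrier F \<times> (UNIV :: nat set)"

lemma mem_limit_rel: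
  "((w, n), (v, m)) \<in> limit_rel \<longleftrightarrow>
    w \<in> carrier F \<and> v \<in> carrier F \<and> K #>\<^bsub>F\<^esub> (\<phi> ^^ m) w = K #>\<^bsub>F\<^esub> (\<phi> ^^ n) v"
  by (simp add: limit_rel_def)

lemma limit_rel_refl: "x \<in> D \<Longrightarrow> (x, x) \<in> limit_rel"
  by (cases x) (simp add: limit_rel_def)

lemma limit_rel_equiv: "equiv D limit_rel"
proof (rule equivI)
  show "limit_rel \<subseteq> D \<times> D" by (auto simp: limit_rel_def)
  show "refl_on D limit_rel" by (rule refl_onI) (auto simp: limit_rel_def)
  show "sym limit_rel" by (rule symI) (auto simp: limit_rel_def)
  show "trans limit_rel"
  proof (rule transI)
    fix x y z assume xy: "(x, y) \<in> limit_rel" and yz: "(y, z) \<in> limit_rel"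
    obtain w n v m u k where xyz: "x = (w, n)" "y = (v, m)" "z = (u, k)"
      by (cases x, cases y, cases z)
    have c: "w \<in> carrier F" "v \<in> carrier F" "u \<in> carrier F"
      and e1: "K #>\<^bsub>F\<^esub> (\<phi> ^^ m) w = K #>\<^bsub>F\<^esub> (\<phi> ^^ n) v"
      and e2: "K #>\<^bsub>F\<^esub> (\<phi> ^^ k) v = K #>\<^bsub>F\<^esub> (\<phi> ^^ m) u"
      using xy yz xyz by (auto simp: limit_rel_def)
    have "K #>\<^bsub>F\<^esub> (\<phi> ^^ (m + k)) w = K #>\<^bsub>F\<^esub> (\<phi> ^^ (k + n)) v"
      using e1 c Ninf_coset_phi_pow_eq_iff[of "(\<phi> ^^ m) w" "(\<phi> ^^ n) v" k]
      by (simp add: phi_pow_closed phi_pow_phi_pow add.commute)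
    also have "\<dots> = K #>\<^bsub>F\<^esub> (\<phi> ^^ (n + m)) u"
      using e2 c Ninf_coset_phi_pow_eq_iff[of "(\<phi> ^^ k) v" "(\<phi> ^^ m) u" n]
      by (simp add: phi_pow_closed phi_pow_phi_pow add.commute)
    finally have "K #>\<^bsub>F\<^esub> (\<phi> ^^ k) w = K #>\<^bsub>F\<^esub> (\<phi> ^^ n) u"
      using c Ninf_coset_phi_pow_eq_iff[of "(\<phi> ^^ k) w" "(\<phi> ^^ n) u" m]
      by (simp add: phi_pow_closed phi_pow_phi_pow add.commute)
    then show "(x, z) \<in> limit_rel" using xyz c by (simp add: limit_rel_def)
  qed
qed

definition lmult :: "'a fword \<Rightarrow> 'a fword \<times> nat \<Rightarrow> 'a fword \<times> nat" where
  "lmult w = (\<lambda>(v, n). ((\<phi> ^^ n) w \<otimes>\<^bsub>F\<^esub> v, n))"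

definition raise :: "'a fword \<times> nat \<Rightarrow> 'a fword \<times> nat" where
  "raise = (\<lambda>(v, n). (v, Suc n))"

text \<open>Level \<open>0\<close> has no lower level, but \<open>(v, 0)\<close> and \<open>(\<phi> v, 1)\<close> are identified.\<close>

definition lower :: "'a fword \<times> nat \<Rightarrow> 'a fword \<times> nat" where
  "lower = (\<lambda>(v, n). case n of 0 \<Rightarrow> (\<phi> v, 0) | Suc k \<Rightarrow> (v, k))"

lemma compatible_lmult:
  assumes w: "w \<in> carrier F"
  shows "compatible limit_rel (lmult w)"
  unfolding compatible_def
proof (intro allI impI)
  fix x y assume xy: "(x, y) \<in> limit_rel"
  obtain v n u m where xy_eq: "x = (v, n)" "y = (u, m)" by (cases x, cases y)
  have c: "v \<in> carrier F" "u \<in> carrier F"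
    and e: "K #>\<^bsub>F\<^esub> (\<phi> ^^ m) v = K #>\<^bsub>F\<^esub> (\<phi> ^^ n) u"
    using xy xy_eq by (auto simp: limit_rel_def)
  have "K #>\<^bsub>F\<^esub> (\<phi> ^^ m) ((\<phi> ^^ n) w \<otimes>\<^bsub>F\<^esub> v)
      = (K #>\<^bsub>F\<^esub> (\<phi> ^^ (m + n)) w) <#>\<^bsub>F\<^esub> (K #>\<^bsub>F\<^esub> (\<phi> ^^ m) v)"
    using c w by (simp add: phi_pow_mult phi_pow_closed Ninf_coset_mult phi_pow_phi_pow)
  also have "\<dots> = (K #>\<^bsub>F\<^esub> (\<phi> ^^ (n + m)) w) <#>\<^bsub>F\<^esub> (K #>\<^bsub>F\<^esub> (\<phi> ^^ n) u)"
    using e by (simp add: add.commute)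
  also have "\<dots> = K #>\<^bsub>F\<^esub> (\<phi> ^^ n) ((\<phi> ^^ m) w \<otimes>\<^bsub>F\<^esub> u)"
    using c w by (simp add: phi_pow_mult phi_pow_closed Ninf_coset_mult phi_pow_phi_pow)
  finally show "(lmult w x, lmult w y) \<in> limit_rel"
    using xy_eq c w by (simp add: limit_rel_def lmult_def phi_pow_closed)
qed

lemma lmult_mult:
  "w \<in> carrier F \<Longrightarrow> u \<in> carrier F \<Longrightarrow> x \<in> D \<Longrightarrow> lmult (w \<otimes>\<^bsub>F\<^esub> u) x = lmult w (lmult u x)"
  by (cases x) (simp add: lmult_def phi_pow_mult F.m_assoc phi_pow_closed)

lemma lmult_one: "x \<in> D \<Longrightarrow> lmult \<one>\<^bsub>F\<^esub> x = x"
  by (cases x) (simp add: lmult_def group_hom.hom_one[OF group_hom_phi_pow])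

lemma compatible_raise: "compatible limit_rel raise"
  unfolding compatible_def
proof (intro allI impI)
  fix x y assume xy: "(x, y) \<in> limit_rel"
  obtain v n u m where xy_eq: "x = (v, n)" "y = (u, m)" by (cases x, cases y)
  have c: "v \<in> carrier F" "u \<in> carrier F"
    and "K #>\<^bsub>F\<^esub> (\<phi> ^^ m) v = K #>\<^bsub>F\<^esub> (\<phi> ^^ n) u"
    using xy xy_eq by (auto simp: limit_rel_def)
  then have "K #>\<^bsub>F\<^esub> (\<phi> ^^ 1) ((\<phi> ^^ m) v) = K #>\<^bsub>F\<^esub> (\<phi> ^^ 1) ((\<phi> ^^ n) u)"
    by (simp only: Ninf_coset_phi_pow_eq_iff phi_pow_closed)
  then show "(raise x, raise y) \<in> limit_rel"
    using xy_eq c by (simp add: limit_rel_def raise_def)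
qed

lemma compatible_lower: "compatible limit_rel lower"
  unfolding compatible_def
proof (intro allI impI)
  fix x y assume xy: "(x, y) \<in> limit_rel"
  obtain v n u m where xy_eq: "x = (v, n)" "y = (u, m)" by (cases x, cases y)
  have c: "v \<in> carrier F" "u \<in> carrier F" "\<phi> v \<in> carrier F" "\<phi> u \<in> carrier F"
    and e: "K #>\<^bsub>F\<^esub> (\<phi> ^^ m) v = K #>\<^bsub>F\<^esub> (\<phi> ^^ n) u"
    using xy xy_eq phi_closed by (auto simp: limit_rel_def)
  have swap: "(\<phi> ^^ k) (\<phi> z) = (\<phi> ^^ Suc k) z" for k z
    by (simp add: funpow_swap1)
  show "(lower x, lower y) \<in> limit_rel"
  proof (cases n; cases m)
    assume "n = 0" "m = 0"
    then show ?thesis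
      using e c Ninf_coset_phi_pow_eq_iff[of v u 1] by (simp add: xy_eq lower_def mem_limit_rel)
  next
    fix k assume "n = 0" "m = Suc k"
    then show ?thesis using e c by (simp add: xy_eq lower_def mem_limit_rel swap)
  next
    fix j assume "n = Suc j" "m = 0"
    then show ?thesis using e c by (simp add: xy_eq lower_def mem_limit_rel swap)
  next
    fix j k assume "n = Suc j" "m = Suc k"
    then show ?thesis
      using e c Ninf_coset_phi_pow_eq_iff[of "(\<phi> ^^ k) v" "(\<phi> ^^ j) u" 1]
      by (simp add: xy_eq lower_def mem_limit_rel phi_pow_closed)
  qed
qed

abbreviation Q where "Q \<equiv> D // limit_rel"
abbreviation Sym where "Sym \<equiv> BijGroup Q"

interpretation Sym: group Sym by (rule group_BijGroup)

definition lmult_perm :: "'a fword \<Rightarrow> ('a fword \<times> nat) set \<Rightarrow> ('a fword \<times> nat) set" where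
  "lmult_perm w = quotient_map D limit_rel (lmult w)"

definition raise_perm :: "('a fword \<times> nat) set \<Rightarrow> ('a fword \<times> nat) set" where
  "raise_perm = quotient_map D limit_rel raise"

lemma Sym_mult: "f \<in> Bij Q \<Longrightarrow> g \<in> Bij Q \<Longrightarrow> f \<otimes>\<^bsub>Sym\<^esub> g = compose Q f g"
  by (simp add: BijGroup_def)

lemma Sym_one: "\<one>\<^bsub>Sym\<^esub> = (\<lambda>S \<in> Q. S)"
  by (simp add: BijGroup_def)

lemma lmult_perm_Bij: "w \<in> carrier F \<Longrightarrow> lmult_perm w \<in> Bij Q"
  unfolding lmult_perm_def
  by (rule quotient_map_Bij[OF limit_rel_equiv compatible_lmult compatible_lmult[of "inv\<^bsub>F\<^esub> w"]])
    (simp_all add: lmult_mult[symmetric] lmult_one limit_rel_refl)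

lemma raise_perm_Bij: "raise_perm \<in> Bij Q"
  unfolding raise_perm_def
proof (rule quotient_map_Bij[OF limit_rel_equiv compatible_raise compatible_lower])
  fix x assume "x \<in> D"
  then obtain v n where x: "x = (v, n)" "v \<in> carrier F" by (cases x) auto
  show "(raise (lower x), x) \<in> limit_rel"
    using x phi_closed by (cases n) (simp_all add: raise_def lower_def mem_limit_rel)
  show "(lower (raise x), x) \<in> limit_rel"
    using x by (simp add: raise_def lower_def mem_limit_rel)
qed

lemma lmult_perm_hom: "lmult_perm \<in> hom F Sym"
proof (rule homI)
  fix x y assume x: "x \<in> carrier F" and y: "y \<in> carrier F"
  have "lmult_perm x \<otimes>\<^bsub>Sym\<^esub> lmult_perm y = quotient_map D limit_rel (lmult x \<circ> lmult y)"
    using x y lmult_perm_Bij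
    by (simp add: Sym_mult lmult_perm_def quotient_map_comp[OF limit_rel_equiv compatible_lmult compatible_lmult])
  also have "\<dots> = lmult_perm (x \<otimes>\<^bsub>F\<^esub> y)"
    unfolding lmult_perm_def
  proof (rule quotient_map_cong[OF limit_rel_equiv
        compatible_comp[OF compatible_lmult[OF x] compatible_lmult[OF y]] compatible_lmult])
    fix p assume "p \<in> D"
    then have "lmult x (lmult y p) \<in> D"
      by (intro compatible_closed[OF limit_rel_equiv compatible_lmult[OF x]]
          compatible_closed[OF limit_rel_equiv compatible_lmult[OF y]])
    then show "((lmult x \<circ> lmult y) p, lmult (x \<otimes>\<^bsub>F\<^esub> y) p) \<in> limit_rel"
      using limit_rel_refl lmult_mult[OF x y \<open>p \<in> D\<close>] by simp
  qed (use x y in simp)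
  finally show "lmult_perm (x \<otimes>\<^bsub>F\<^esub> y) = lmult_perm x \<otimes>\<^bsub>Sym\<^esub> lmult_perm y" by simp
qed (simp add: lmult_perm_Bij BijGroup_def)

lemma lmult_perm_raise_perm:
  assumes "w \<in> carrier F"
  shows "lmult_perm w \<otimes>\<^bsub>Sym\<^esub> raise_perm = raise_perm \<otimes>\<^bsub>Sym\<^esub> lmult_perm (\<phi> w)"
proof -
  have "lmult w \<circ> raise = raise \<circ> lmult (\<phi> w)"
    by (auto simp: lmult_def raise_def funpow_swap1)
  then show ?thesis
    using assms phi_closed lmult_perm_Bij raise_perm_Bij
    by (simp add: Sym_mult lmult_perm_def raise_perm_def
        quotient_map_comp[OF limit_rel_equiv compatible_lmult compatible_raise]
        quotient_map_comp[OF limit_rel_equiv compatible_raise compatible_lmult])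
qed

definition hnn_gen_perm :: "'a option \<Rightarrow> ('a fword \<times> nat) set \<Rightarrow> ('a fword \<times> nat) set" where
  "hnn_gen_perm x = (case x of None \<Rightarrow> raise_perm | Some a \<Rightarrow> lmult_perm (letter a))"

definition hnn_action :: "'a option fword \<Rightarrow> ('a fword \<times> nat) set \<Rightarrow> ('a fword \<times> nat) set" where
  "hnn_action = free_lift Sym hnn_gen_perm"

lemma hnn_gen_perm_closed: "hnn_gen_perm ` insert None (Some ` A) \<subseteq> carrier Sym"
  using raise_perm_Bij lmult_perm_Bij[OF letter_in_free_group]
  by (auto simp: hnn_gen_perm_def BijGroup_def)

lemma hnn_action_hom: "hnn_action \<in> hom (FG A) Sym"
  unfolding hnn_action_def by (rule free_lift_hom[OF group_BijGroup hnn_gen_perm_closed])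

lemma hnn_action_stable_letter: "hnn_action (letter None) = raise_perm"
  using free_lift_letter[OF group_BijGroup hnn_gen_perm_closed, of None]
  by (simp add: hnn_action_def hnn_gen_perm_def)

lemma hnn_action_embed: "w \<in> carrier F \<Longrightarrow> hnn_action (embed w) = lmult_perm w"
proof -
  assume w: "w \<in> carrier F"
  have "(hnn_action \<circ> embed) (letter a) = lmult_perm (letter a)" if "a \<in> A" for a
    using free_lift_letter[OF group_BijGroup hnn_gen_perm_closed, of "Some a"] that
    by (simp add: hnn_action_def embed_letter hnn_gen_perm_def)
  then show ?thesis
    using free_group_hom_eq[OF group_BijGroup hom_compose[OF embed_hom hnn_action_hom]
        lmult_perm_hom _ w]
    by simp
qed

lemma lmult_perm_relator:
  assumes r: "r \<in> R"
  shows "lmult_perm r = \<one>\<^bsub>Sym\<^esub>"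
proof -
  have rc: "r \<in> carrier F" using r R_carrier by blast
  have "lmult_perm r = quotient_map D limit_rel id"
    unfolding lmult_perm_def
  proof (rule quotient_map_cong[OF limit_rel_equiv compatible_lmult[OF rc] compatible_id])
    fix x assume "x \<in> D"
    then obtain v n where x: "x = (v, n)" "v \<in> carrier F" by (cases x) auto
    have "(\<phi> ^^ (n + n)) r \<in> K"
      using phi_pow_in_NR[OF r, of "n + n"] rc phi_pow_closed
      by (auto simp: mem_Ninf_iff preim_pow_def intro!: exI[of _ 0])
    then have "K #>\<^bsub>F\<^esub> (\<phi> ^^ n) ((\<phi> ^^ n) r \<otimes>\<^bsub>F\<^esub> v) = K #>\<^bsub>F\<^esub> (\<phi> ^^ n) v"
      using rc x Ninf_coset_eq_iff
      by (simp add: phi_pow_mult phi_pow_closed phi_pow_phi_pow F.m_assoc)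
    then show "(lmult r x, id x) \<in> limit_rel"
      using x rc by (simp add: mem_limit_rel lmult_def phi_pow_closed)
  qed
  then show ?thesis by (simp add: quotient_map_id[OF limit_rel_equiv] Sym_one)
qed

lemma raise_perm_conjugate:
  assumes w: "w \<in> carrier F"
  shows "inv\<^bsub>Sym\<^esub> raise_perm \<otimes>\<^bsub>Sym\<^esub> lmult_perm w \<otimes>\<^bsub>Sym\<^esub> raise_perm = lmult_perm (\<phi> w)"
proof -
  have T: "raise_perm \<in> carrier Sym" and L: "lmult_perm w \<in> carrier Sym"
    and P: "lmult_perm (\<phi> w) \<in> carrier Sym"
    using raise_perm_Bij lmult_perm_Bij w phi_closed by (auto simp: BijGroup_def)
  have "inv\<^bsub>Sym\<^esub> raise_perm \<otimes>\<^bsub>Sym\<^esub> lmult_perm w \<otimes>\<^bsub>Sym\<^esub> raise_perm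
      = inv\<^bsub>Sym\<^esub> raise_perm \<otimes>\<^bsub>Sym\<^esub> (raise_perm \<otimes>\<^bsub>Sym\<^esub> lmult_perm (\<phi> w))"
    using T L lmult_perm_raise_perm[OF w] by (simp add: Sym.m_assoc)
  also have "\<dots> = lmult_perm (\<phi> w)"
    using T P by (simp add: Sym.m_assoc[symmetric])
  finally show ?thesis .
qed

lemma hnn_relators_kernel: "hnn_relators A R \<phi> \<subseteq> kernel (FG A) Sym hnn_action"
proof -
  interpret act: group_hom "FG A" Sym hnn_action
    by (simp add: group_hom_def group_hom_axioms_def hnn_action_hom FG.is_group Sym.is_group)
  have "hnn_action (embed r) = \<one>\<^bsub>Sym\<^esub>" if "r \<in> R" for r
  proof -
    have "r \<in> carrier F" using that R_carrier by blast
    then show ?thesis using hnn_action_embed lmult_perm_relator[OF that] by simp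
  qed
  moreover have "hnn_action (inv\<^bsub>FG A\<^esub> (letter None) \<otimes>\<^bsub>FG A\<^esub> letter (Some a) \<otimes>\<^bsub>FG A\<^esub>
      letter None \<otimes>\<^bsub>FG A\<^esub> inv\<^bsub>FG A\<^esub> (embed (\<phi> (letter a)))) = \<one>\<^bsub>Sym\<^esub>" if a: "a \<in> A" for a
  proof -
    have la: "letter a \<in> carrier F" by (rule letter_in_free_group[OF a])
    have pa: "\<phi> (letter a) \<in> carrier F" by (rule phi_closed[OF la])
    have "lmult_perm (\<phi> (letter a)) \<in> carrier Sym"
      using lmult_perm_Bij[OF pa] by (simp add: BijGroup_def)
    then show ?thesis
      using letter_None_closed letter_Some_closed[OF a] embed_closed[OF pa] raise_perm_conjugate[OF la]
      by (simp add: hnn_action_stable_letter hnn_action_embed[OF pa]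
          hnn_action_embed[OF la, symmetric] embed_letter)
  qed
  ultimately show ?thesis
    using hnn_relators_carrier unfolding hnn_relators_def kernel_def by auto
qed

lemma hnn_rel_subgroup_kernel: "H \<subseteq> kernel (FG A) Sym hnn_action"
  unfolding hnn_rel_subgroup_def
proof (rule normal_closure_minimal[OF _ hnn_relators_kernel])
  show "kernel (FG A) Sym hnn_action \<lhd> FG A"
    by (rule group_hom.normal_kernel)
      (simp add: group_hom_def group_hom_axioms_def hnn_action_hom FG.is_group Sym.is_group)
qed

lemma kernel_subset_Ninf: "kernel F G \<iota> \<subseteq> K"
proof
  fix w assume "w \<in> kernel F G \<iota>"
  then have w: "w \<in> carrier F" and "H #>\<^bsub>FG A\<^esub> embed w = H"
    by (auto simp: kernel_def hnn_group_def hnn_incl_def one_FactGroup)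
  then have "embed w \<in> H"
    using FG.rcos_self[OF embed_closed[OF w] normal_imp_subgroup[OF hnn_rel_subgroup_normal]] by simp
  then have trivial: "lmult_perm w = (\<lambda>S \<in> Q. S)"
    using hnn_rel_subgroup_kernel hnn_action_embed[OF w] by (auto simp: kernel_def Sym_one)
  have base: "(\<one>\<^bsub>F\<^esub>, 0) \<in> D" by simp
  have "limit_rel `` {(w, 0)} = limit_rel `` {lmult w (\<one>\<^bsub>F\<^esub>, 0)}"
    using w by (simp add: lmult_def)
  also have "\<dots> = lmult_perm w (limit_rel `` {(\<one>\<^bsub>F\<^esub>, 0)})"
    unfolding lmult_perm_def by (rule quotient_map_class[OF limit_rel_equiv compatible_lmult[OF w] base, symmetric])
  also have "\<dots> = limit_rel `` {(\<one>\<^bsub>F\<^esub>, 0)}"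
    using trivial base by (simp add: quotientI)
  finally have "limit_rel `` {(w, 0)} = limit_rel `` {(\<one>\<^bsub>F\<^esub>, 0)}" .
  then have "((w, 0), (\<one>\<^bsub>F\<^esub>, 0)) \<in> limit_rel"
    using eq_equiv_class_iff[OF limit_rel_equiv] w by simp
  then show "w \<in> K"
    using w by (simp add: mem_limit_rel Ninf_coset_eq_iff)
qed

end

theorem theorem4p4:
  fixes A :: "'a set" and R :: "'a fword set" and \<phi> :: "'a fword \<Rightarrow> 'a fword"
  assumes "finite A"
    and "\<phi> \<in> hom (free_group A) (free_group A)"
    and "finite R" and "R \<subseteq> carrier (free_group A)"
  shows "kernel (free_group A) (hnn_group A R \<phi>) (hnn_incl A R \<phi>)
           = normal_closure (free_group A) (Ninf A R \<phi>)
         \<and> (\<forall>i. preim_pow A \<phi> i (NR A R \<phi>) \<subseteq> preim_pow A \<phi> (Suc i) (NR A R \<phi>))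
         \<and> \<phi> ` Ninf A R \<phi> \<subseteq> Ninf A R \<phi>
         \<and> Ninf A R \<phi> = preim_pow A \<phi> 1 (Ninf A R \<phi>)"
proof -
  interpret ascending_hnn A R \<phi>
    using assms by (simp add: ascending_hnn_def)
  have "kernel (free_group A) (hnn_group A R \<phi>) (hnn_incl A R \<phi>) = Ninf A R \<phi>"
    using kernel_subset_Ninf Ninf_subset_kernel by blast
  moreover have "normal_closure (free_group A) (Ninf A R \<phi>) = Ninf A R \<phi>"
    by (rule normal_closure_of_normal[OF group_free_group Ninf_normal])
  ultimately show ?thesis
    using preim_pow_subset_Suc phi_Ninf Ninf_eq_preim_pow_1 by auto
qed

end
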